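(* Let $\Gamma=\{0=\rho_1<\rho_2<\cdots\}$ be an Arf numerical semigroup and $d_i=\rho_{i+1}-\rho_i$ for $i\ge1$. If $i\ge2$ and $d_i<d_{i-1}$, then \[ \mathrm{Ap}(\Gamma,-d_i)=\{\rho_1,\dots,\rho_{i-1}\}. \]
   Context: A numerical semigroup is a subset of $\mathbb N$ containing $0$, closed under addition, with finite complement; its elements listed increasingly are $\rho_1<\rho_2<\cdots$. $\Gamma$ is Arf if $\rho_i+\rho_j-\rho_k\in\Gamma$ for all $i\ge j\ge k$. For $x\in\mathbb Z$, $\mathrm{Ap}(\Gamma,x)=\{s\in\Gamma: s-x\notin\Gamma\}$. *)

theory Defs
  imports Main "HOL-Library.Infinite_Set"
begin

definition numerical_semigroup :: "nat set \<Rightarrow> bool" where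
  "numerical_semigroup S \<longleftrightarrow> 0 \<in> S \<and> (\<forall>a\<in>S. \<forall>b\<in>S. a + b \<in> S) \<and> finite (UNIV - S)"

definition rho :: "nat set \<Rightarrow> nat \<Rightarrow> nat" where
  "rho S i = enumerate S (i - 1)"

definition arf :: "nat set \<Rightarrow> bool" where
  "arf S \<longleftrightarrow> numerical_semigroup S \<and>
     (\<forall>i j k. 1 \<le> k \<and> k \<le> j \<and> j \<le> i \<longrightarrow> rho S i + rho S j - rho S k \<in> S)"

definition apery :: "nat set \<Rightarrow> int \<Rightarrow> int set" where
  "apery S x = {s \<in> int ` S. s - x \<notin> int ` S}"

end

theory Submission
  imports Defs
begin

text \<open>Write \<open>a < b < c\<close> for the consecutive elements \<open>rho (i - 1), rho i, rho (i + 1)\<close> and \<open>d = c - b\<close>.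
  Every \<open>s \<ge> b\<close> in the semigroup has \<open>s + d\<close> in it: for \<open>s = b\<close> this is \<open>c\<close>, and for \<open>s \<ge> c\<close>
  it is the Arf element \<open>s + c - b\<close>. Conversely, if \<open>s \<le> a\<close> and \<open>s + d\<close> were in it, the Arf
  property would put \<open>a + (s + d) - s = a + d\<close> in it; but \<open>d < b - a\<close> puts \<open>a + d\<close> strictly
  between \<open>a\<close> and \<open>b\<close>.\<close>

lemma numerical_semigroup_infinite: "numerical_semigroup S \<Longrightarrow> infinite S"
  unfolding numerical_semigroup_def by (metis Diff_infinite_finite infinite_UNIV_nat infinite_super)

lemma arf_closed:
  assumes "arf S" "a \<in> S" "b \<in> S" "c \<in> S" "c \<le> a" "c \<le> b"
  shows "a + b - c \<in> S"
proof -
  have inf: "infinite S"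
    using assms(1) numerical_semigroup_infinite arf_def by blast
  have ordered: "x + y - z \<in> S" if "x \<in> S" "y \<in> S" "z \<in> S" "z \<le> y" "y \<le> x" for x y z
  proof -
    obtain l m n where l: "enumerate S l = x" and m: "enumerate S m = y" and n: "enumerate S n = z"
      using enumerate_Ex[OF inf] \<open>x \<in> S\<close> \<open>y \<in> S\<close> \<open>z \<in> S\<close> by metis
    have "n \<le> m" "m \<le> l"
      using that l m n inf by auto
    then have "rho S (Suc l) + rho S (Suc m) - rho S (Suc n) \<in> S"
      using assms(1) unfolding arf_def by (metis Suc_le_mono le_add1 plus_1_eq_Suc)
    then show ?thesis
      using l m n by (simp add: rho_def)
  qed
  show ?thesis
  proof (cases "b \<le> a")
    case True
    then show ?thesis using ordered assms by blast
  next
    case False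
    then show ?thesis using ordered[of b a c] assms by (simp add: add.commute)
  qed
qed

lemma enumerate_le_or_Suc_le:
  fixes S :: "nat set"
  assumes "infinite S" "s \<in> S"
  shows "s \<le> enumerate S n \<or> enumerate S (Suc n) \<le> s"
proof -
  obtain m where "enumerate S m = s"
    using enumerate_Ex assms by blast
  then show ?thesis
    using assms(1) by (cases "m \<le> n") auto
qed

lemma image_enumerate_atMost:
  fixes S :: "nat set"
  assumes "infinite S"
  shows "enumerate S ` {..n} = {s \<in> S. s \<le> enumerate S n}"
proof
  show "enumerate S ` {..n} \<subseteq> {s \<in> S. s \<le> enumerate S n}"
    using assms enumerate_in_set by auto
  show "{s \<in> S. s \<le> enumerate S n} \<subseteq> enumerate S ` {..n}"
  proof
    fix s assume "s \<in> {s \<in> S. s \<le> enumerate S n}"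
    moreover obtain m where "enumerate S m = s"
      using enumerate_Ex assms calculation by blast
    ultimately show "s \<in> enumerate S ` {..n}"
      using assms by auto
  qed
qed

lemma rho_image_atLeastAtMost: "rho S ` {1..Suc n} = enumerate S ` {..n}"
proof -
  have "(\<lambda>k. k - 1) ` {1..Suc n} = {..n}"
    by (force simp: image_iff)
  moreover have "rho S ` A = enumerate S ` ((\<lambda>k. k - 1) ` A)" for A
    by (simp add: rho_def image_image)
  ultimately show ?thesis
    by simp
qed

lemma apery_neg_of_nat: "apery S (- int d) = int ` {s \<in> S. s + d \<notin> S}"
  unfolding apery_def by (auto simp flip: of_nat_add simp: image_iff)

lemma arf_shift_not_mem_iff:
  assumes "arf S" "a \<in> S" "b \<in> S" "c \<in> S" "a < b" "b < c"
    and gap_ab: "\<forall>s\<in>S. s \<le> a \<or> b \<le> s"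
    and gap_bc: "\<forall>s\<in>S. s \<le> b \<or> c \<le> s"
    and shorter: "c - b < b - a"
    and "s \<in> S"
  shows "s + (c - b) \<notin> S \<longleftrightarrow> s \<le> a"
proof
  assume "s + (c - b) \<notin> S"
  moreover have "s + (c - b) \<in> S" if "b \<le> s"
  proof (cases "s = b")
    case True
    then show ?thesis using \<open>c \<in> S\<close> \<open>b < c\<close> by simp
  next
    case False
    then have "c \<le> s" using gap_bc \<open>s \<in> S\<close> \<open>b \<le> s\<close> by fastforce
    then have "s + c - b \<in> S" using arf_closed assms(1,3,4,6) \<open>s \<in> S\<close> by simp
    then show ?thesis using \<open>b < c\<close> by simp
  qed
  ultimately show "s \<le> a"
    using gap_ab \<open>s \<in> S\<close> by fastforce
next
  assume "s \<le> a"
  have "a + (c - b) \<notin> S"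
    using gap_ab shorter \<open>b < c\<close> by fastforce
  moreover have "a + (s + (c - b)) - s \<in> S" if "s + (c - b) \<in> S"
    using arf_closed[OF assms(1) \<open>a \<in> S\<close> that \<open>s \<in> S\<close> \<open>s \<le> a\<close>] by simp
  ultimately show "s + (c - b) \<notin> S"
    by auto
qed

theorem lemma3p3:
  fixes \<Gamma> :: "nat set" and i :: nat
  assumes "arf \<Gamma>"
    and "i \<ge> 2"
    and "rho \<Gamma> (i + 1) - rho \<Gamma> i < rho \<Gamma> i - rho \<Gamma> (i - 1)"
  shows "apery \<Gamma> (- int (rho \<Gamma> (i + 1) - rho \<Gamma> i)) = int ` rho \<Gamma> ` {1..i - 1}"
proof -
  have inf: "infinite \<Gamma>"
    using assms(1) numerical_semigroup_infinite arf_def by blast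
  obtain p where i: "i = Suc (Suc p)"
    using assms(2) by (metis add_2_eq_Suc le_Suc_ex)
  let ?e = "enumerate \<Gamma>"
  have rho_i: "rho \<Gamma> (i + 1) = ?e (Suc (Suc p))" "rho \<Gamma> i = ?e (Suc p)" "rho \<Gamma> (i - 1) = ?e p"
    by (simp_all add: i rho_def)
  have shorter: "?e (Suc (Suc p)) - ?e (Suc p) < ?e (Suc p) - ?e p"
    using assms(3) unfolding rho_i .
  have "{s \<in> \<Gamma>. s + (?e (Suc (Suc p)) - ?e (Suc p)) \<notin> \<Gamma>} = {s \<in> \<Gamma>. s \<le> ?e p}"
    using arf_shift_not_mem_iff[OF assms(1) _ _ _ _ _ _ _ shorter]
      enumerate_le_or_Suc_le[OF inf] enumerate_in_set[OF inf] inf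
    by auto
  also have "\<dots> = rho \<Gamma> ` {1..i - 1}"
    using image_enumerate_atMost[OF inf, of p] rho_image_atLeastAtMost[of \<Gamma> p] by (simp add: i)
  finally show ?thesis
    by (simp only: apery_neg_of_nat rho_i)
qed

end
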